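(* There exist universal constants $0<c\le C$ such that for every integer $d\ge 1$ and every integer $k\ge 2$ there exist a set $\mathcal{X}$ and a concept class $\mathcal{H}\subseteq\mathcal{Y}^{\mathcal{X}}$ with $\mathcal{Y}=\{0,1,\dots,k\}$ such that (1) $\mathsf{opt}_{\operatorname{full}}^{\operatorname{det}}(\mathcal{H})=d+1$; (2) $c\,dk\le \mathsf{opt}_{\operatorname{bandit}}^{\operatorname{det}}(\mathcal{H})\le C\,dk$; (3) $c(d+k)\le \mathsf{opt}_{\operatorname{bandit}}^{\operatorname{adap}}(\mathcal{H})\le C(d+k)$.
   Context: A concept class is a nonempty $\mathcal{H}\subseteq\mathcal{Y}^{\mathcal{X}}$; its induced pattern class $\mathcal{P}(\mathcal{H})$ is the set of finite sequences of examples $(x,y)\in\mathcal{X}\times\mathcal{Y}$ consistent with some $h\in\mathcal{H}$ (i.e. $h(x)=y$ for all examples), and $\mathsf{opt}(\mathcal{H}):=\mathsf{opt}(\mathcal{P}(\mathcal{H}))$ for each notion below. Online learning: in rounds $t=1,2,\dots$ the adversary presents $x_t$, the learner outputs a prediction $\hat y_t$ (a draw from a distribution depending on past observations and $x_t$; deterministic learners use point masses), and a mistake occurs if $\hat y_t\neq y_t$ for the true label $y_t$. Full-information feedback reveals $y_t$; bandit feedback reveals only whether $\hat y_t=y_t$. $\mathsf{opt}_{\operatorname{full}}^{\operatorname{det}}(\mathcal{P})$ (resp. $\mathsf{opt}_{\operatorname{bandit}}^{\operatorname{det}}(\mathcal{P})$) is the infimum over deterministic learners of the supremum over sequences $S\in\mathcal{P}$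 of the number of mistakes with full-information (resp. bandit) feedback. A bandit history is realizable by $\mathcal{P}$ if some assignment of true labels, agreeing with all the correct/incorrect observations, makes the labeled sequence an element of $\mathcal{P}$. An adaptive adversary in each round chooses $x_t$ from the history, sees the learner's distribution $\pi^{(t)}$, and chooses a distribution $\tau^{(t)}$ for $y_t$; $\hat y_t\sim\pi^{(t)}$, $y_t\sim\tau^{(t)}$; it must keep the history realizable for every $y_t$ in the support of $\tau^{(t)}$. $\mathsf{opt}_{\operatorname{bandit}}^{\operatorname{adap}}(\mathcal{P})=\inf_{\text{learner}}\sup_{\text{adversary}}$ expected mistakes with bandit feedback. *)

theory Defs
  imports "HOL-Probability.Probability_Mass_Function"
begin

(* Instances are encoded with domain X :: nat set and labels in nat;
   a concept class is a set H of functions nat => nat (only values on X matter),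
   with labels in Y = {0..k}. *)

definition patterns :: "nat set \<Rightarrow> (nat \<Rightarrow> nat) set \<Rightarrow> (nat \<times> nat) list set" where
  "patterns X H = {S. \<exists>h\<in>H. \<forall>(x,y)\<in>set S. x \<in> X \<and> h x = y}"

fun full_mistakes ::
  "((nat \<times> nat) list \<Rightarrow> nat \<Rightarrow> nat) \<Rightarrow> (nat \<times> nat) list \<Rightarrow> (nat \<times> nat) list \<Rightarrow> nat" where
  "full_mistakes L h [] = 0"
| "full_mistakes L h ((x,y) # S) =
     (if L h x = y then 0 else 1) + full_mistakes L (h @ [(x,y)]) S"

definition opt_full_det :: "nat set \<Rightarrow> (nat \<Rightarrow> nat) set \<Rightarrow> ennreal" where
  "opt_full_det X H = (INF L. SUP S\<in>patterns X H. of_nat (full_mistakes L [] S))"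

(* bandit observations: (x_t, prediction, whether prediction was correct) *)
fun bandit_mistakes ::
  "((nat \<times> nat \<times> bool) list \<Rightarrow> nat \<Rightarrow> nat) \<Rightarrow> (nat \<times> nat \<times> bool) list \<Rightarrow> (nat \<times> nat) list \<Rightarrow> nat" where
  "bandit_mistakes L h [] = 0"
| "bandit_mistakes L h ((x,y) # S) =
     (let p = L h x in (if p = y then 0 else 1) + bandit_mistakes L (h @ [(x, p, p = y)]) S)"

definition opt_bandit_det :: "nat set \<Rightarrow> (nat \<Rightarrow> nat) set \<Rightarrow> ennreal" where
  "opt_bandit_det X H = (INF L. SUP S\<in>patterns X H. of_nat (bandit_mistakes L [] S))"

definition bandit_realizable :: "nat set \<Rightarrow> (nat \<Rightarrow> nat) set \<Rightarrow> (nat \<times> nat \<times> bool) list \<Rightarrow> bool" where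
  "bandit_realizable X H obs =
     (\<exists>ys. length ys = length obs \<and>
        (\<forall>i<length obs. (fst (snd (obs ! i)) = ys ! i) = snd (snd (obs ! i))) \<and>
        zip (map fst obs) ys \<in> patterns X H)"

(* full history (x_t, prediction, true label) and the learner's bandit view of it *)
definition obs_of :: "(nat \<times> nat \<times> nat) list \<Rightarrow> (nat \<times> nat \<times> bool) list" where
  "obs_of h = map (\<lambda>(x,p,y). (x, p, p = y)) h"

(* T rounds of the randomized bandit game against an adaptive adversary (ax, ay);
   returns the distribution of the number of mistakes *)
fun play ::
  "((nat \<times> nat \<times> bool) list \<Rightarrow> nat \<Rightarrow> nat pmf) \<Rightarrow> ((nat \<times> nat \<times> nat) list \<Rightarrow> nat) \<Rightarrow>
   ((nat \<times> nat \<times> nat) list \<Rightarrow> nat pmf \<Rightarrow> nat pmf) \<Rightarrow> nat \<Rightarrow> (nat \<times> nat \<times> nat) list \<Rightarrow> nat pmf" where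
  "play L ax ay 0 h = return_pmf 0"
| "play L ax ay (Suc n) h =
     (let x = ax h; \<pi> = L (obs_of h) x; \<tau> = ay h \<pi> in
      bind_pmf \<pi> (\<lambda>p. bind_pmf \<tau> (\<lambda>y.
        map_pmf (\<lambda>m. (if p = y then 0 else 1) + m) (play L ax ay n (h @ [(x, p, y)])))))"

definition valid_adversary ::
  "nat set \<Rightarrow> (nat \<Rightarrow> nat) set \<Rightarrow> nat \<Rightarrow> ((nat \<times> nat \<times> bool) list \<Rightarrow> nat \<Rightarrow> nat pmf) \<Rightarrow>
   ((nat \<times> nat \<times> nat) list \<Rightarrow> nat) \<Rightarrow> ((nat \<times> nat \<times> nat) list \<Rightarrow> nat pmf \<Rightarrow> nat pmf) \<Rightarrow> bool" where
  "valid_adversary X H k L ax ay =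
     (\<forall>h. bandit_realizable X H (obs_of h) \<longrightarrow>
        (let x = ax h; \<pi> = L (obs_of h) x; \<tau> = ay h \<pi> in
          set_pmf \<tau> \<subseteq> {0..k} \<and>
          (\<forall>p\<in>set_pmf \<pi>. \<forall>y\<in>set_pmf \<tau>. bandit_realizable X H (obs_of h @ [(x, p, p = y)]))))"

definition opt_bandit_adap :: "nat set \<Rightarrow> (nat \<Rightarrow> nat) set \<Rightarrow> nat \<Rightarrow> ennreal" where
  "opt_bandit_adap X H k =
     (INF L. SUP A\<in>{(ax, ay). valid_adversary X H k L ax ay}.
        SUP T. \<integral>\<^sup>+ m. of_nat m \<partial>measure_pmf (play L (fst A) (snd A) T []))"

end

theory Submission
  imports Defs
begin

text \<open>
  The witness class consists of the functions \<open>f :: nat \<Rightarrow> nat\<close> that vanish on at most \<open>d\<close>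
  points and take one common value \<open>s \<in> {1..k}\<close>, the level of \<open>f\<close>, everywhere else.

  With full information a learner errs at most once on a nonzero label (afterwards it knows
  the level) and otherwise only on zeros, so at most \<open>d + 1\<close> times; labelling \<open>d + 1\<close> fresh
  points against the learner's predictions matches this.

  With bandit feedback a deterministic learner may have to find the level by trial: a value
  refuted at more than \<open>d\<close> points is not the level, so predicting the least value refuted at
  most \<open>d\<close> times errs at most \<open>k (d + 1)\<close> times.  Conversely, if every prediction on
  \<open>k (d + 1) - 1\<close> fresh points is declared wrong, some value was predicted at most \<open>d\<close>
  times and serves as the level of a consistent target, forcing \<open>d k\<close> mistakes.

  An adversary revealing the feasible label
  that the learner is least likely to predict forces about \<open>k/2\<close> expected mistakes when asking one
  point repeatedly, and \<open>d/2\<close> when asking fresh points (where \<open>0\<close> and a nonzero label are both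
  feasible).  The learner that guesses \<open>0\<close> with probability \<open>1/2\<close> at fresh points until it
  sees the level makes at most \<open>5 d + 4 k\<close> expected mistakes: before the level is known,
  \<open>5 d + 4 k - 4 \<cdot> #(zeros found)\<close> and afterwards \<open>d - #(zeros inferred)\<close> is a
  potential that drops in expectation by at least the probability of a mistake.
\<close>

section \<open>The concept class\<close>

definition sparse_class :: "nat \<Rightarrow> nat \<Rightarrow> (nat \<Rightarrow> nat) set" where
  "sparse_class d k = {f. \<exists>s\<in>{1..k}. (\<forall>x. f x = 0 \<or> f x = s) \<and>
     finite {x. f x = 0} \<and> card {x. f x = 0} \<le> d}"

lemma sparse_classI:
  assumes "s \<in> {1..k}" "\<And>x. f x \<noteq> 0 \<Longrightarrow> f x = s"
    and "{x. f x = 0} \<subseteq> A" "finite A" "card A \<le> d"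
  shows "f \<in> sparse_class d k"
  using assms card_mono[OF assms(4,3)] finite_subset[OF assms(3,4)]
  unfolding sparse_class_def by (intro CollectI bexI[of _ s]) auto

lemma sparse_classE:
  assumes "f \<in> sparse_class d k"
  obtains s where "s \<in> {1..k}" "\<And>x. f x = 0 \<or> f x = s"
    "finite {x. f x = 0}" "card {x. f x = 0} \<le> d"
  using assms unfolding sparse_class_def by blast

lemma const_in_sparse_class: "s \<in> {1..k} \<Longrightarrow> (\<lambda>_. s) \<in> sparse_class d k"
  by (rule sparse_classI[where A = "{}"]) auto

lemma sparse_class_le: "f \<in> sparse_class d k \<Longrightarrow> f x \<le> k"
  by (elim sparse_classE) (metis atLeastAtMost_iff le0)

lemma sparse_class_nonzero_eq:
  "f \<in> sparse_class d k \<Longrightarrow> f x \<noteq> 0 \<Longrightarrow> f z \<noteq> 0 \<Longrightarrow> f x = f z"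
  by (elim sparse_classE) metis

lemma card_le_if_subset_zeros:
  "f \<in> sparse_class d k \<Longrightarrow> A \<subseteq> {x. f x = 0} \<Longrightarrow> card A \<le> d"
  by (elim sparse_classE) (meson card_mono le_trans)

lemma patterns_UNIV_iff: "S \<in> patterns UNIV H \<longleftrightarrow> (\<exists>h\<in>H. \<forall>(x, y)\<in>set S. h x = y)"
  unfolding patterns_def by auto

definition consistent :: "(nat \<Rightarrow> nat) \<Rightarrow> (nat \<times> nat \<times> bool) list \<Rightarrow> bool" where
  "consistent f obs \<longleftrightarrow> (\<forall>(x, p, b)\<in>set obs. (p = f x) = b)"

lemma consistent_Nil [simp]: "consistent f []"
  by (simp add: consistent_def)

lemma consistent_Cons [simp]:
  "consistent f ((x, p, b) # obs) \<longleftrightarrow> (p = f x) = b \<and> consistent f obs"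
  by (simp add: consistent_def)

lemma consistent_append [simp]:
  "consistent f (obs @ obs') \<longleftrightarrow> consistent f obs \<and> consistent f obs'"
  unfolding consistent_def set_append ball_Un ..

lemma consistent_correct: "consistent f obs \<Longrightarrow> (x, q, True) \<in> set obs \<Longrightarrow> f x = q"
  unfolding consistent_def by auto

lemma consistent_wrong: "consistent f obs \<Longrightarrow> (x, q, False) \<in> set obs \<Longrightarrow> f x \<noteq> q"
  unfolding consistent_def by auto

lemma bandit_realizable_UNIV_iff:
  "bandit_realizable UNIV H obs \<longleftrightarrow> (\<exists>f\<in>H. consistent f obs)"
proof
  assume "bandit_realizable UNIV H obs"
  then obtain ys where len: "length ys = length obs"
    and agree: "\<forall>i<length obs. (fst (snd (obs ! i)) = ys ! i) = snd (snd (obs ! i))"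
    and "zip (map fst obs) ys \<in> patterns UNIV H"
    unfolding bandit_realizable_def by blast
  then obtain f where f: "f \<in> H" "\<forall>(x, y)\<in>set (zip (map fst obs) ys). f x = y"
    unfolding patterns_UNIV_iff by blast
  have "(p = f x) = b" if mem: "(x, p, b) \<in> set obs" for x p b
  proof -
    obtain i where i: "i < length obs" "obs ! i = (x, p, b)"
      using in_set_conv_nth[THEN iffD1, OF mem] by blast
    have "(map fst obs ! i, ys ! i) \<in> set (zip (map fst obs) ys)"
      unfolding in_set_zip using i(1) len by (auto intro!: exI[of _ i])
    then have "f x = ys ! i" using f(2) i by auto
    then show ?thesis using agree i by auto
  qed
  then show "\<exists>f\<in>H. consistent f obs" using f(1) unfolding consistent_def by blast
next
  assume "\<exists>f\<in>H. consistent f obs"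
  then obtain f where f: "f \<in> H" "consistent f obs" by blast
  define ys where "ys = map (\<lambda>e. f (fst e)) obs"
  have "zip (map fst obs) ys = map (\<lambda>e. (fst e, f (fst e))) obs"
    unfolding ys_def by (induction obs) auto
  then have "zip (map fst obs) ys \<in> patterns UNIV H"
    unfolding patterns_UNIV_iff using f(1) by auto
  moreover have "(fst (snd (obs ! i)) = ys ! i) = snd (snd (obs ! i))" if "i < length obs" for i
  proof -
    obtain x p b where e: "obs ! i = (x, p, b)" by (cases "obs ! i")
    then have "(p = f x) = b" using f(2) nth_mem[OF that] unfolding consistent_def by fastforce
    then show ?thesis using e that by (simp add: ys_def)
  qed
  ultimately show "bandit_realizable UNIV H obs"
    unfolding bandit_realizable_def by (intro exI[of _ ys]) (simp add: ys_def)
qed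

lemma obs_of_Nil [simp]: "obs_of [] = []"
  unfolding obs_of_def by simp

lemma obs_of_snoc [simp]: "obs_of (h @ [(x, p, y)]) = obs_of h @ [(x, p, p = y)]"
  unfolding obs_of_def by simp

lemma finite_Collect_mem_set: "finite {x. (x, y) \<in> set xs}"
  by (rule finite_subset[of _ "fst ` set xs"]) force+

lemma opt_full_det_le:
  assumes "\<And>S. S \<in> patterns X H \<Longrightarrow> full_mistakes L [] S \<le> n"
  shows "opt_full_det X H \<le> of_nat n"
proof -
  have "(SUP S\<in>patterns X H. of_nat (full_mistakes L [] S)) \<le> (of_nat n :: ennreal)"
    using assms by (intro SUP_least) simp
  then show ?thesis unfolding opt_full_det_def by (rule INF_lower2[of L UNIV, OF UNIV_I])
qed

lemma opt_full_det_ge: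
  "(\<And>L. \<exists>S\<in>patterns X H. n \<le> full_mistakes L [] S) \<Longrightarrow> of_nat n \<le> opt_full_det X H"
  unfolding opt_full_det_def by (rule INF_greatest) (meson SUP_upper2 of_nat_mono)

lemma opt_bandit_det_le:
  assumes "\<And>S. S \<in> patterns X H \<Longrightarrow> bandit_mistakes L [] S \<le> n"
  shows "opt_bandit_det X H \<le> of_nat n"
proof -
  have "(SUP S\<in>patterns X H. of_nat (bandit_mistakes L [] S)) \<le> (of_nat n :: ennreal)"
    using assms by (intro SUP_least) simp
  then show ?thesis unfolding opt_bandit_det_def by (rule INF_lower2[of L UNIV, OF UNIV_I])
qed

lemma opt_bandit_det_ge:
  "(\<And>L. \<exists>S\<in>patterns X H. n \<le> bandit_mistakes L [] S) \<Longrightarrow> of_nat n \<le> opt_bandit_det X H"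
  unfolding opt_bandit_det_def by (rule INF_greatest) (meson SUP_upper2 of_nat_mono)

definition expected_mistakes ::
  "((nat \<times> nat \<times> bool) list \<Rightarrow> nat \<Rightarrow> nat pmf) \<Rightarrow> ((nat \<times> nat \<times> nat) list \<Rightarrow> nat) \<Rightarrow>
   ((nat \<times> nat \<times> nat) list \<Rightarrow> nat pmf \<Rightarrow> nat pmf) \<Rightarrow> nat \<Rightarrow> (nat \<times> nat \<times> nat) list \<Rightarrow> ennreal" where
  "expected_mistakes L ax ay n h = (\<integral>\<^sup>+m. of_nat m \<partial>measure_pmf (play L ax ay n h))"

lemma expected_mistakes_0 [simp]: "expected_mistakes L ax ay 0 h = 0"
  by (simp add: expected_mistakes_def)

lemma expected_mistakes_Suc:
  "expected_mistakes L ax ay (Suc n) h =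
     (\<integral>\<^sup>+p. \<integral>\<^sup>+y. of_nat (if p = y then 0 else 1) + expected_mistakes L ax ay n (h @ [(ax h, p, y)])
        \<partial>measure_pmf (ay h (L (obs_of h) (ax h))) \<partial>measure_pmf (L (obs_of h) (ax h)))"
  by (simp add: expected_mistakes_def Let_def nn_integral_add)

lemma opt_bandit_adap_le:
  assumes "\<And>ax ay T. valid_adversary X H k L ax ay \<Longrightarrow> expected_mistakes L ax ay T [] \<le> B"
  shows "opt_bandit_adap X H k \<le> B"
proof -
  have "(SUP A\<in>{(ax, ay). valid_adversary X H k L ax ay}.
      SUP T. \<integral>\<^sup>+m. of_nat m \<partial>measure_pmf (play L (fst A) (snd A) T [])) \<le> B"
  proof (intro SUP_least)
    fix A T assume "A \<in> {(ax, ay). valid_adversary X H k L ax ay}"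
    then show "(\<integral>\<^sup>+m. of_nat m \<partial>measure_pmf (play L (fst A) (snd A) T [])) \<le> B"
      using assms[of "fst A" "snd A" T] unfolding expected_mistakes_def by (simp add: case_prod_beta)
  qed
  then show ?thesis unfolding opt_bandit_adap_def by (rule INF_lower2[of L UNIV, OF UNIV_I])
qed

lemma opt_bandit_adap_ge:
  assumes "\<And>L. \<exists>ax ay T. valid_adversary X H k L ax ay \<and> B \<le> expected_mistakes L ax ay T []"
  shows "B \<le> opt_bandit_adap X H k"
  unfolding opt_bandit_adap_def
proof (rule INF_greatest)
  fix L
  obtain ax ay T where v: "valid_adversary X H k L ax ay" and B: "B \<le> expected_mistakes L ax ay T []"
    using assms by blast
  have "B \<le> (SUP T. \<integral>\<^sup>+m. of_nat m \<partial>measure_pmf (play L ax ay T []))"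
    using B unfolding expected_mistakes_def by (rule SUP_upper2[OF UNIV_I])
  also have "\<dots> \<le> (SUP A\<in>{(ax, ay). valid_adversary X H k L ax ay}.
      SUP T. \<integral>\<^sup>+m. of_nat m \<partial>measure_pmf (play L (fst A) (snd A) T []))"
    using v by (intro SUP_upper2[of "(ax, ay)"]) auto
  finally show "B \<le> \<dots>" .
qed

section \<open>Full information\<close>

definition has_nonzero :: "(nat \<times> nat) list \<Rightarrow> bool" where
  "has_nonzero h \<longleftrightarrow> (\<exists>(z, y)\<in>set h. y \<noteq> 0)"

definition full_learner :: "(nat \<times> nat) list \<Rightarrow> nat \<Rightarrow> nat" where
  "full_learner h x =
     (if \<exists>y. (x, y) \<in> set h then SOME y. (x, y) \<in> set h
      else if has_nonzero h then SOME y. \<exists>z. (z, y) \<in> set h \<and> y \<noteq> 0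
      else 1)"

definition full_potential :: "(nat \<times> nat) list \<Rightarrow> nat" where
  "full_potential h = card {x. (x, 0) \<in> set h} + (if has_nonzero h then 1 else 0)"

lemma full_potential_le:
  assumes "f \<in> sparse_class d k" "\<forall>(x, y)\<in>set h. f x = y"
  shows "full_potential h \<le> d + 1"
proof -
  have "card {x. (x, 0) \<in> set h} \<le> d"
    using assms by (intro card_le_if_subset_zeros) auto
  then show ?thesis unfolding full_potential_def by simp
qed

lemma full_learner_step:
  assumes f: "f \<in> sparse_class d k" and h: "\<forall>(x, y)\<in>set h. f x = y"
  shows "(if full_learner h x = f x then 0 else 1) + full_potential h \<le> full_potential (h @ [(x, f x)])"
proof (cases "full_learner h x = f x")
  case True
  have "card {x. (x, 0) \<in> set h} \<le> card {x'. (x', 0) \<in> set (h @ [(x, f x)])}"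
    by (rule card_mono[OF finite_Collect_mem_set]) auto
  then show ?thesis using True unfolding full_potential_def has_nonzero_def by auto
next
  case wrong: False
  have unseen: "\<not> (\<exists>y. (x, y) \<in> set h)"
  proof
    assume "\<exists>y. (x, y) \<in> set h"
    then have "(x, SOME y. (x, y) \<in> set h) \<in> set h" by (rule someI_ex)
    then show False using wrong h \<open>\<exists>y. (x, y) \<in> set h\<close> by (auto simp: full_learner_def)
  qed
  have "{x'. (x', 0) \<in> set (h @ [(x, f x)])} =
      (if f x = 0 then insert x {x. (x, 0) \<in> set h} else {x. (x, 0) \<in> set h})"
    by auto
  then have card_zeros: "card {x'. (x', 0) \<in> set (h @ [(x, f x)])} =
      card {x. (x, 0) \<in> set h} + (if f x = 0 then 1 else 0)"
    using unseen finite_Collect_mem_set[of 0 h] by simp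
  show ?thesis
  proof (cases "has_nonzero h")
    case True
    then have "\<exists>y z. (z, y) \<in> set h \<and> y \<noteq> 0" unfolding has_nonzero_def by blast
    then obtain z where z: "(z, full_learner h x) \<in> set h" "full_learner h x \<noteq> 0"
      using someI_ex[of "\<lambda>y. \<exists>z. (z, y) \<in> set h \<and> y \<noteq> 0"] unseen True
      by (auto simp: full_learner_def)
    \<comment> \<open>the level is already known, so the mistake is at a new zero\<close>
    have "f z = full_learner h x" using z(1) h by auto
    then have "f x = 0"
      using sparse_class_nonzero_eq[OF f, of x z] z(2) wrong by auto
    then show ?thesis using card_zeros True unfolding full_potential_def has_nonzero_def by auto
  next
    case False
    then show ?thesis using card_zeros unfolding full_potential_def has_nonzero_def by auto
  qed
qed

lemma full_mistakes_full_learner: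
  assumes f: "f \<in> sparse_class d k"
  shows "\<forall>(x, y)\<in>set h. f x = y \<Longrightarrow> \<forall>(x, y)\<in>set S. f x = y \<Longrightarrow>
    full_mistakes full_learner h S + full_potential h \<le> d + 1"
proof (induction S arbitrary: h)
  case Nil
  then show ?case using full_potential_le[OF f] by simp
next
  case (Cons a S)
  obtain x where a: "a = (x, f x)" using Cons.prems(2) by (cases a) auto
  have "full_mistakes full_learner (h @ [(x, f x)]) S + full_potential (h @ [(x, f x)]) \<le> d + 1"
    using Cons by (intro Cons.IH) (auto simp: a)
  then show ?case using full_learner_step[OF f Cons.prems(1), of x] by (simp add: a)
qed

lemma opt_full_det_sparse_class_le: "opt_full_det UNIV (sparse_class d k) \<le> of_nat (d + 1)"
proof (rule opt_full_det_le)
  fix S assume "S \<in> patterns UNIV (sparse_class d k)"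
  then obtain f where "f \<in> sparse_class d k" "\<forall>(x, y)\<in>set S. f x = y"
    unfolding patterns_UNIV_iff by blast
  then show "full_mistakes full_learner [] S \<le> d + 1"
    using full_mistakes_full_learner[of f d k "[]" S] by simp
qed

lemma full_mistakes_snoc:
  "full_mistakes L h (S @ [(x, y)]) = full_mistakes L h S + (if L (h @ S) x = y then 0 else 1)"
  by (induction S arbitrary: h) auto

definition full_adversary_label :: "nat \<Rightarrow> (nat \<times> nat) list \<Rightarrow> nat \<Rightarrow> nat \<Rightarrow> nat" where
  "full_adversary_label d h t p =
     (if t < d then (if p = 0 then 1 else 0)
      else if p \<noteq> 1 then 1 else if has_nonzero h then 0 else 2)"

fun full_adversary_run :: "((nat \<times> nat) list \<Rightarrow> nat \<Rightarrow> nat) \<Rightarrow> nat \<Rightarrow> nat \<Rightarrow> (nat \<times> nat) list" where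
  "full_adversary_run L d 0 = []"
| "full_adversary_run L d (Suc t) =
     (let h = full_adversary_run L d t in h @ [(t, full_adversary_label d h t (L h t))])"

lemma full_mistakes_adversary_run: "full_mistakes L [] (full_adversary_run L d n) = n"
  by (induction n) (auto simp: Let_def full_mistakes_snoc full_adversary_label_def)

lemma full_adversary_run_in_patterns:
  assumes "2 \<le> k"
  shows "full_adversary_run L d (Suc d) \<in> patterns UNIV (sparse_class d k)"
proof -
  let ?run = "full_adversary_run L d"
  define lab where "lab t = full_adversary_label d (?run t) t (L (?run t) t)" for t
  have set_run: "set (?run n) = (\<lambda>t. (t, lab t)) ` {..<n}" for n
    by (induction n) (auto simp: Let_def lab_def lessThan_Suc)
  have nonzero_iff: "has_nonzero (?run d) \<longleftrightarrow> (\<exists>t<d. lab t \<noteq> 0)"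
    unfolding has_nonzero_def set_run by auto
  have lab_early: "lab t \<in> {0, 1}" if "t < d" for t
    using that by (simp add: lab_def full_adversary_label_def)
  have lab_last: "lab d \<in> {0, 1, 2}"
    by (simp add: lab_def full_adversary_label_def)
  have lab_two: "\<forall>t<d. lab t = 0" if "lab d = 2"
    using that nonzero_iff lab_early by (auto simp: lab_def[of d] full_adversary_label_def split: if_splits)
  obtain j where j: "j \<le> d" "lab j \<noteq> 0"
  proof (cases "lab d = 0")
    case True
    then have "has_nonzero (?run d)"
      by (auto simp: lab_def full_adversary_label_def split: if_splits)
    then show ?thesis using that nonzero_iff by (meson less_imp_le)
  qed (use that in blast)
  define s :: nat where "s = (if lab d = 2 then 2 else 1)"
  define f where "f x = (if x \<le> d then lab x else s)" for x
  have "f \<in> sparse_class d k"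
  proof (rule sparse_classI[where A = "{..d} - {j}"])
    show "s \<in> {1..k}" using assms by (simp add: s_def)
    show "f x = s" if "f x \<noteq> 0" for x
      using that lab_early[of x] lab_last lab_two
      by (cases "x < d"; cases "x = d") (auto simp: f_def s_def)
    show "{x. f x = 0} \<subseteq> {..d} - {j}"
      using j by (auto simp: f_def s_def split: if_splits)
  qed (use j in auto)
  moreover have "\<forall>(x, y)\<in>set (?run (Suc d)). f x = y"
    unfolding set_run f_def by auto
  ultimately show ?thesis unfolding patterns_UNIV_iff by blast
qed

lemma opt_full_det_sparse_class:
  assumes "2 \<le> k"
  shows "opt_full_det UNIV (sparse_class d k) = of_nat (d + 1)"
proof (rule antisym[OF opt_full_det_sparse_class_le opt_full_det_ge])
  fix L
  show "\<exists>S\<in>patterns UNIV (sparse_class d k). d + 1 \<le> full_mistakes L [] S"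
    by (intro bexI[OF _ full_adversary_run_in_patterns[OF assms, of L]])
      (simp add: full_mistakes_adversary_run del: full_adversary_run.simps)
qed

section \<open>Deterministic learning with bandit feedback\<close>

definition refuted :: "(nat \<times> nat \<times> bool) list \<Rightarrow> nat \<Rightarrow> nat set" where
  "refuted obs p = {x. (x, p, False) \<in> set obs}"

definition candidate :: "nat \<Rightarrow> nat \<Rightarrow> (nat \<times> nat \<times> bool) list \<Rightarrow> nat \<Rightarrow> nat \<Rightarrow> bool" where
  "candidate d k obs x p \<longleftrightarrow> p \<in> {1..k} \<and> card (refuted obs p) \<le> d \<and> (x, p, False) \<notin> set obs"

definition bandit_learner :: "nat \<Rightarrow> nat \<Rightarrow> (nat \<times> nat \<times> bool) list \<Rightarrow> nat \<Rightarrow> nat" where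
  "bandit_learner d k obs x =
     (if \<exists>q. (x, q, True) \<in> set obs then SOME q. (x, q, True) \<in> set obs
      else if \<exists>p. candidate d k obs x p then LEAST p. candidate d k obs x p
      else 0)"

definition bandit_potential :: "nat \<Rightarrow> nat \<Rightarrow> (nat \<times> nat \<times> bool) list \<Rightarrow> nat" where
  "bandit_potential d k obs = (\<Sum>p\<in>{1..k}. min (card (refuted obs p)) (d + 1))"

lemma finite_refuted: "finite (refuted obs p)"
  unfolding refuted_def by (rule finite_Collect_mem_set)

lemma bandit_potential_le: "bandit_potential d k obs \<le> k * (d + 1)"
proof -
  have "bandit_potential d k obs \<le> (\<Sum>p\<in>{1..k}. d + 1)"
    unfolding bandit_potential_def by (intro sum_mono) simp
  then show ?thesis by simp
qed

lemma bandit_potential_mono: "bandit_potential d k obs \<le> bandit_potential d k (obs @ [e])"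
  unfolding bandit_potential_def
  by (intro sum_mono min.mono card_mono finite_refuted) (auto simp: refuted_def)

lemma target_is_candidate:
  assumes "f \<in> sparse_class d k" "consistent f obs" "f x \<noteq> 0"
  shows "candidate d k obs x (f x)"
proof -
  obtain s where s: "s \<in> {1..k}" "\<And>x. f x = 0 \<or> f x = s"
    using assms(1) by (elim sparse_classE) blast
  have fx: "f x = s" using s(2) assms(3) by metis
  have "refuted obs (f x) \<subseteq> {z. f z = 0}"
    using consistent_wrong[OF assms(2)] s(2) fx unfolding refuted_def by fastforce
  then have "card (refuted obs (f x)) \<le> d" by (rule card_le_if_subset_zeros[OF assms(1)])
  moreover have "(x, f x, False) \<notin> set obs" using consistent_wrong[OF assms(2)] by blast
  ultimately show ?thesis using s(1) fx unfolding candidate_def by simp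
qed

lemma bandit_learner_step:
  fixes x :: nat
  assumes f: "f \<in> sparse_class d k" and obs: "consistent f obs"
  defines "p \<equiv> bandit_learner d k obs x"
  shows "(if p = f x then 0 else 1) + bandit_potential d k obs
    \<le> bandit_potential d k (obs @ [(x, p, p = f x)])"
proof (cases "p = f x")
  case True
  then show ?thesis using bandit_potential_mono by simp
next
  case wrong: False
  have unseen: "\<not> (\<exists>q. (x, q, True) \<in> set obs)"
  proof
    assume known: "\<exists>q. (x, q, True) \<in> set obs"
    then have "(x, SOME q. (x, q, True) \<in> set obs, True) \<in> set obs" by (rule someI_ex)
    then show False
      using consistent_correct[OF obs] wrong known by (simp add: p_def bandit_learner_def)
  qed
  have "\<exists>p. candidate d k obs x p"
  proof (rule ccontr)
    assume none: "\<not> ?thesis"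
    then have "p = 0" using unseen by (auto simp: p_def bandit_learner_def)
    then have "f x \<noteq> 0" using wrong by simp
    then show False using none target_is_candidate[OF f obs] by blast
  qed
  then have "candidate d k obs x p"
    using unseen by (simp add: p_def bandit_learner_def) (rule LeastI_ex)
  then have p: "p \<in> {1..k}" "card (refuted obs p) \<le> d" "x \<notin> refuted obs p"
    unfolding candidate_def refuted_def by auto
  have "refuted (obs @ [(x, p, p = f x)]) p = insert x (refuted obs p)"
    using wrong unfolding refuted_def by auto
  then have grow: "min (card (refuted obs p)) (d + 1) + 1
      = min (card (refuted (obs @ [(x, p, p = f x)]) p)) (d + 1)"
    using p finite_refuted by simp
  have rest: "(\<Sum>q\<in>{1..k} - {p}. min (card (refuted obs q)) (d + 1))
      \<le> (\<Sum>q\<in>{1..k} - {p}. min (card (refuted (obs @ [(x, p, p = f x)]) q)) (d + 1))"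
    by (intro sum_mono min.mono card_mono finite_refuted) (auto simp: refuted_def)
  show ?thesis
    using grow rest wrong p(1)
    unfolding bandit_potential_def by (simp add: sum.remove)
qed

lemma bandit_mistakes_bandit_learner:
  assumes f: "f \<in> sparse_class d k"
  shows "consistent f obs \<Longrightarrow> \<forall>(x, y)\<in>set S. f x = y \<Longrightarrow>
    bandit_mistakes (bandit_learner d k) obs S + bandit_potential d k obs \<le> k * (d + 1)"
proof (induction S arbitrary: obs)
  case Nil
  then show ?case using bandit_potential_le by simp
next
  case (Cons a S)
  obtain x where a: "a = (x, f x)" using Cons.prems(2) by (cases a) auto
  let ?p = "bandit_learner d k obs x"
  have "bandit_mistakes (bandit_learner d k) (obs @ [(x, ?p, ?p = f x)]) S
      + bandit_potential d k (obs @ [(x, ?p, ?p = f x)]) \<le> k * (d + 1)"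
    using Cons by (intro Cons.IH) (auto simp: a)
  then show ?case using bandit_learner_step[OF f Cons.prems(1), of x] by (simp add: a Let_def)
qed

lemma opt_bandit_det_sparse_class_le:
  assumes "1 \<le> d"
  shows "opt_bandit_det UNIV (sparse_class d k) \<le> ennreal (2 * real d * real k)"
proof -
  have "opt_bandit_det UNIV (sparse_class d k) \<le> of_nat (k * (d + 1))"
  proof (rule opt_bandit_det_le)
    fix S assume "S \<in> patterns UNIV (sparse_class d k)"
    then obtain f where "f \<in> sparse_class d k" "\<forall>(x, y)\<in>set S. f x = y"
      unfolding patterns_UNIV_iff by blast
    then show "bandit_mistakes (bandit_learner d k) [] S \<le> k * (d + 1)"
      using bandit_mistakes_bandit_learner[of f d k "[]" S] by simp
  qed
  also have "\<dots> \<le> ennreal (2 * real d * real k)"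
    unfolding ennreal_of_nat_eq_real_of_nat using assms mult_right_mono[of 1 "real d" "real k"]
    by (intro ennreal_leI) (simp add: algebra_simps)
  finally show ?thesis .
qed

fun all_wrong_history :: "((nat \<times> nat \<times> bool) list \<Rightarrow> nat \<Rightarrow> nat) \<Rightarrow> nat \<Rightarrow> (nat \<times> nat \<times> bool) list" where
  "all_wrong_history L 0 = []"
| "all_wrong_history L (Suc t) = all_wrong_history L t @ [(t, L (all_wrong_history L t) t, False)]"

lemma bandit_mistakes_all_wrong:
  "(\<And>i. t \<le> i \<Longrightarrow> i < t + m \<Longrightarrow> L (all_wrong_history L i) i \<noteq> f i) \<Longrightarrow>
   bandit_mistakes L (all_wrong_history L t) (map (\<lambda>i. (i, f i)) [t..<t + m]) = m"
proof (induction m arbitrary: t)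
  case 0
  then show ?case by simp
next
  case (Suc m)
  have "[t..<t + Suc m] = t # [Suc t..<Suc t + m]" by (simp add: upt_rec)
  moreover have "bandit_mistakes L (all_wrong_history L (Suc t)) (map (\<lambda>i. (i, f i)) [Suc t..<Suc t + m]) = m"
    using Suc.prems by (intro Suc.IH) auto
  ultimately show ?case using Suc.prems[of t] by (simp add: Let_def)
qed

lemma pigeonhole_card_preimage:
  assumes "finite A" "N < card A * (d + 1)"
  shows "\<exists>s\<in>A. card {i. i < N \<and> g i = s} \<le> d"
proof (rule ccontr)
  assume "\<not> ?thesis"
  then have "card A * (d + 1) \<le> (\<Sum>s\<in>A. card {i. i < N \<and> g i = s})"
    using sum_mono[of A "\<lambda>_. d + 1"] by (simp add: not_le Suc_le_eq)
  also have "\<dots> = card (\<Union>s\<in>A. {i. i < N \<and> g i = s})"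
    using assms(1) by (intro card_UN_disjoint[symmetric]) auto
  also have "\<dots> \<le> card {..<N}" by (intro card_mono) auto
  finally show False using assms(2) by simp
qed

lemma bandit_adversary_all_wrong:
  assumes "1 \<le> k"
  shows "\<exists>S\<in>patterns UNIV (sparse_class d k). d * k \<le> bandit_mistakes L [] S"
proof -
  define N where "N = k * (d + 1) - 1"
  define g where "g i = L (all_wrong_history L i) i" for i
  obtain s where s: "s \<in> {1..k}" "card {i. i < N \<and> g i = s} \<le> d"
    using pigeonhole_card_preimage[of "{1..k}" N d g] assms by (auto simp: N_def)
  \<comment> \<open>the target is zero exactly where the learner predicted \<open>s\<close>, so every prediction is wrong\<close>
  define f where "f x = (if x < N \<and> g x = s then 0 else s)" for x
  have "f \<in> sparse_class d k"
    using s by (intro sparse_classI[where A = "{i. i < N \<and> g i = s}"]) (auto simp: f_def)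
  then have "map (\<lambda>i. (i, f i)) [0..<N] \<in> patterns UNIV (sparse_class d k)"
    unfolding patterns_UNIV_iff by auto
  moreover have "bandit_mistakes L [] (map (\<lambda>i. (i, f i)) [0..<N]) = N"
    using bandit_mistakes_all_wrong[of 0 N L f] s(1) by (auto simp: f_def g_def)
  moreover have "d * k \<le> N" unfolding N_def using assms by (simp add: algebra_simps)
  ultimately show ?thesis by (auto intro!: bexI[of _ "map (\<lambda>i. (i, f i)) [0..<N]"])
qed

lemma opt_bandit_det_sparse_class_ge:
  assumes "1 \<le> k"
  shows "ennreal (real d * real k) \<le> opt_bandit_det UNIV (sparse_class d k)"
  using opt_bandit_det_ge[OF bandit_adversary_all_wrong[OF assms]]
  by (simp add: ennreal_of_nat_eq_real_of_nat)

section \<open>Lower bound against adaptive adversaries\<close>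

lemma nn_integral_mistake:
  "(\<integral>\<^sup>+p. of_nat (if p = y then 0 else 1) \<partial>measure_pmf \<pi>) = ennreal (1 - pmf \<pi> y)"
proof -
  have "(\<integral>\<^sup>+p. of_nat (if p = y then 0 else 1) \<partial>measure_pmf \<pi>) =
      (\<integral>\<^sup>+p. indicator (UNIV - {y}) p \<partial>measure_pmf \<pi>)"
    by (intro nn_integral_cong) (simp add: indicator_def)
  also have "\<dots> = emeasure (measure_pmf \<pi>) (UNIV - {y})" by simp
  also have "\<dots> = ennreal (1 - pmf \<pi> y)"
    using measure_pmf.prob_compl[of "{y}" \<pi>]
    by (simp add: measure_pmf.emeasure_eq_measure measure_pmf_single)
  finally show ?thesis .
qed

lemma nn_integral_ge_off_point:
  assumes "0 \<le> c" "\<And>p. p \<in> set_pmf \<pi> \<Longrightarrow> p \<noteq> y \<Longrightarrow> ennreal c \<le> G p"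
  shows "ennreal (c * (1 - pmf \<pi> y)) \<le> (\<integral>\<^sup>+p. G p \<partial>measure_pmf \<pi>)"
proof -
  have "ennreal (c * (1 - pmf \<pi> y)) = (\<integral>\<^sup>+p. ennreal c * of_nat (if p = y then 0 else 1) \<partial>measure_pmf \<pi>)"
    using assms(1) by (simp add: nn_integral_cmult nn_integral_mistake ennreal_mult pmf_le_1)
  also have "\<dots> \<le> (\<integral>\<^sup>+p. G p \<partial>measure_pmf \<pi>)"
    using assms(2) by (intro nn_integral_mono_AE) (auto simp: AE_measure_pmf_iff)
  finally show ?thesis .
qed

lemma card_mult_min_pmf_le_1:
  assumes "finite A" "y \<in> A" "\<forall>z\<in>A. pmf \<pi> y \<le> pmf \<pi> z"
  shows "real (card A) * pmf \<pi> y \<le> 1"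
proof -
  have "real (card A) * pmf \<pi> y \<le> (\<Sum>z\<in>A. pmf \<pi> z)"
    using assms sum_mono[of A "\<lambda>_. pmf \<pi> y" "pmf \<pi>"] by simp
  also have "\<dots> = measure (measure_pmf \<pi>) A"
    using assms(1) by (simp add: measure_measure_pmf_finite)
  also have "\<dots> \<le> 1" by simp
  finally show ?thesis .
qed

definition feasible_labels :: "(nat \<Rightarrow> nat) set \<Rightarrow> nat \<Rightarrow> (nat \<times> nat \<times> bool) list \<Rightarrow> nat \<Rightarrow> nat set" where
  "feasible_labels H k obs x = {y \<in> {0..k}. bandit_realizable UNIV H (obs @ [(x, y, True)])}"

definition least_likely_adversary ::
  "(nat \<Rightarrow> nat) set \<Rightarrow> nat \<Rightarrow> ((nat \<times> nat \<times> nat) list \<Rightarrow> nat) \<Rightarrow>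
   (nat \<times> nat \<times> nat) list \<Rightarrow> nat pmf \<Rightarrow> nat pmf" where
  "least_likely_adversary H k ax h \<pi> =
     return_pmf (arg_min_on (pmf \<pi>) (feasible_labels H k (obs_of h) (ax h)))"

lemma finite_feasible_labels: "finite (feasible_labels H k obs x)"
  unfolding feasible_labels_def by simp

lemma feasible_labels_ne:
  assumes "\<forall>f\<in>H. \<forall>x. f x \<le> k" "bandit_realizable UNIV H obs"
  shows "feasible_labels H k obs x \<noteq> {}"
proof -
  obtain f where "f \<in> H" "consistent f obs"
    using assms(2) unfolding bandit_realizable_UNIV_iff by blast
  then have "f x \<in> feasible_labels H k obs x"
    using assms(1) unfolding feasible_labels_def bandit_realizable_UNIV_iff by auto
  then show ?thesis by blast
qed

lemma realizable_if_feasible: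
  "y \<in> feasible_labels H k obs x \<Longrightarrow> bandit_realizable UNIV H (obs @ [(x, p, p = y)])"
  unfolding feasible_labels_def bandit_realizable_UNIV_iff by auto

lemma card_feasible_labels_snoc_wrong:
  "card (feasible_labels H k obs x) - 1 \<le> card (feasible_labels H k (obs @ [(x, p, False)]) x)"
proof -
  have "feasible_labels H k obs x - {p} \<subseteq> feasible_labels H k (obs @ [(x, p, False)]) x"
    unfolding feasible_labels_def bandit_realizable_UNIV_iff by (auto simp: consistent_def)
  then have "card (feasible_labels H k obs x - {p}) \<le> card (feasible_labels H k (obs @ [(x, p, False)]) x)"
    by (rule card_mono[OF finite_feasible_labels])
  then show ?thesis using diff_card_le_card_Diff[of "{p}" "feasible_labels H k obs x"] by simp
qed

lemma least_likely_label:
  fixes \<pi> :: "nat pmf" and x :: nat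
  assumes "\<forall>f\<in>H. \<forall>x. f x \<le> k" "bandit_realizable UNIV H obs"
  defines "y \<equiv> arg_min_on (pmf \<pi>) (feasible_labels H k obs x)"
  shows "y \<in> feasible_labels H k obs x" "\<forall>z\<in>feasible_labels H k obs x. pmf \<pi> y \<le> pmf \<pi> z"
  using arg_min_if_finite[OF finite_feasible_labels feasible_labels_ne[OF assms(1,2)], where f="pmf \<pi>"]
  unfolding y_def by (auto simp: not_less)

lemma valid_least_likely_adversary:
  assumes "\<forall>f\<in>H. \<forall>x. f x \<le> k"
  shows "valid_adversary UNIV H k L ax (least_likely_adversary H k ax)"
  unfolding valid_adversary_def Let_def
proof (intro allI impI conjI ballI)
  fix h assume "bandit_realizable UNIV H (obs_of h)"
  then have feasible: "arg_min_on (pmf (L (obs_of h) (ax h))) (feasible_labels H k (obs_of h) (ax h))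
      \<in> feasible_labels H k (obs_of h) (ax h)"
    by (rule least_likely_label(1)[OF assms])
  then show "set_pmf (least_likely_adversary H k ax h (L (obs_of h) (ax h))) \<subseteq> {0..k}"
    by (simp add: least_likely_adversary_def feasible_labels_def)
  fix p y assume "y \<in> set_pmf (least_likely_adversary H k ax h (L (obs_of h) (ax h)))"
  then show "bandit_realizable UNIV H (obs_of h @ [(ax h, p, p = y)])"
    using realizable_if_feasible[OF feasible] by (simp add: least_likely_adversary_def)
qed

lemma expected_mistakes_least_likely_Suc:
  fixes L :: "(nat \<times> nat \<times> bool) list \<Rightarrow> nat \<Rightarrow> nat pmf"
    and ax :: "(nat \<times> nat \<times> nat) list \<Rightarrow> nat" and h :: "(nat \<times> nat \<times> nat) list"
    and H :: "(nat \<Rightarrow> nat) set" and k :: nat and \<pi> :: "nat pmf" and y :: nat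
  defines "\<pi> \<equiv> L (obs_of h) (ax h)"
    and "y \<equiv> arg_min_on (pmf \<pi>) (feasible_labels H k (obs_of h) (ax h))"
  shows "expected_mistakes L ax (least_likely_adversary H k ax) (Suc n) h =
    ennreal (1 - pmf \<pi> y) +
    (\<integral>\<^sup>+p. expected_mistakes L ax (least_likely_adversary H k ax) n (h @ [(ax h, p, y)]) \<partial>measure_pmf \<pi>)"
  unfolding expected_mistakes_Suc
  by (simp add: least_likely_adversary_def nn_integral_add nn_integral_mistake \<pi>_def y_def)

lemma half_min_Suc_le:
  fixes q :: real
  assumes "1 \<le> r" "0 \<le> q" "real r * q \<le> 1"
  shows "real (min (Suc n) (r - 1)) / 2 \<le> (1 + real (min n (r - 2)) / 2) * (1 - q)"
proof (cases "r = 1")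
  case False
  define m where "m = min n (r - 2)"
  have Suc_m: "min (Suc n) (r - 1) = Suc m" and "m + 2 \<le> r"
    using assms(1) False by (auto simp: m_def)
  then have m: "real m + 2 \<le> real r" by linarith
  have "(real m + 1) / 2 \<le> (1 + real m / 2) * (1 - 1 / real r)"
    using m by (simp add: field_simps)
  also have "\<dots> \<le> (1 + real m / 2) * (1 - q)"
    using assms m by (intro mult_left_mono) (auto simp: field_simps)
  finally show ?thesis unfolding Suc_m m_def by simp
qed (use assms in simp)

lemma least_likely_adversary_fixed_point:
  assumes H: "\<forall>f\<in>H. \<forall>x. f x \<le> k"
  shows "bandit_realizable UNIV H (obs_of h) \<Longrightarrow>
    ennreal (real (min n (card (feasible_labels H k (obs_of h) x) - 1)) / 2)
      \<le> expected_mistakes L (\<lambda>_. x) (least_likely_adversary H k (\<lambda>_. x)) n h"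
proof (induction n arbitrary: h)
  case 0
  then show ?case by simp
next
  case (Suc n)
  define \<pi> where "\<pi> = L (obs_of h) x"
  define R where "R = feasible_labels H k (obs_of h) x"
  define y where "y = arg_min_on (pmf \<pi>) R"
  define c where "c = real (min n (card R - 2)) / 2"
  have c_nonneg: "0 \<le> c" by (simp add: c_def)
  have y: "y \<in> R" "\<forall>z\<in>R. pmf \<pi> y \<le> pmf \<pi> z"
    using least_likely_label[OF H Suc.prems] unfolding R_def y_def by blast+
  then have card_R: "1 \<le> card R" "real (card R) * pmf \<pi> y \<le> 1"
    using finite_feasible_labels[of H k "obs_of h" x] card_mult_min_pmf_le_1
    unfolding R_def by (auto simp: Suc_le_eq card_gt_0_iff)
  have "ennreal c \<le> expected_mistakes L (\<lambda>_. x) (least_likely_adversary H k (\<lambda>_. x)) n (h @ [(x, p, y)])"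
    if "p \<noteq> y" for p
  proof -
    let ?h' = "h @ [(x, p, y)]"
    let ?R' = "feasible_labels H k (obs_of ?h') x"
    have "card R - 1 \<le> card ?R'"
      using card_feasible_labels_snoc_wrong that unfolding R_def by simp
    then have "c \<le> real (min n (card ?R' - 1)) / 2"
      unfolding c_def by (intro divide_right_mono) auto
    moreover have "bandit_realizable UNIV H (obs_of ?h')"
      using realizable_if_feasible y(1) unfolding R_def by simp
    ultimately show ?thesis using Suc.IH by (meson ennreal_leI order_trans)
  qed
  then have "ennreal (c * (1 - pmf \<pi> y)) \<le>
      (\<integral>\<^sup>+p. expected_mistakes L (\<lambda>_. x) (least_likely_adversary H k (\<lambda>_. x)) n (h @ [(x, p, y)]) \<partial>measure_pmf \<pi>)"
    using c_nonneg by (intro nn_integral_ge_off_point) auto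
  moreover have "ennreal ((1 + c) * (1 - pmf \<pi> y)) = ennreal (1 - pmf \<pi> y) + ennreal (c * (1 - pmf \<pi> y))"
    using pmf_le_1[of \<pi> y] c_nonneg
    by (subst ennreal_plus[symmetric]) (auto simp: algebra_simps mult_left_le)
  ultimately have "ennreal ((1 + c) * (1 - pmf \<pi> y)) \<le>
      expected_mistakes L (\<lambda>_. x) (least_likely_adversary H k (\<lambda>_. x)) (Suc n) h"
    unfolding expected_mistakes_least_likely_Suc \<pi>_def[symmetric] R_def[symmetric] y_def[symmetric]
    by (simp add: add_left_mono)
  moreover have "real (min (Suc n) (card R - 1)) / 2 \<le> (1 + c) * (1 - pmf \<pi> y)"
    unfolding c_def by (rule half_min_Suc_le[OF card_R(1) _ card_R(2)]) simp
  ultimately show ?case unfolding R_def by (meson ennreal_leI order_trans)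
qed

lemma fresh_point_feasible_labels:
  assumes "bandit_realizable UNIV (sparse_class d k) obs" "\<forall>e\<in>set obs. fst e < t" "t < d"
  shows "2 \<le> card (feasible_labels (sparse_class d k) k obs t)"
proof -
  obtain f where f: "f \<in> sparse_class d k" "consistent f obs"
    using assms(1) unfolding bandit_realizable_UNIV_iff by blast
  obtain s where s: "s \<in> {1..k}" "\<And>x. f x = 0 \<or> f x = s"
    using f(1) by (elim sparse_classE) blast
  have "v \<in> feasible_labels (sparse_class d k) k obs t" if v: "v \<in> {0, s}" for v
  proof -
    define g where "g z = (if z < t then f z else if z = t then v else s)" for z
    have "g \<in> sparse_class d k"
    proof (rule sparse_classI[where A = "{..t}"])
      show "g x = s" if "g x \<noteq> 0" for x using that s(2)[of x] v by (auto simp: g_def)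
    qed (use s assms(3) in \<open>auto simp: g_def\<close>)
    moreover have "consistent g obs"
      using f(2) assms(2) unfolding consistent_def g_def by fastforce
    ultimately show ?thesis
      using s v unfolding feasible_labels_def bandit_realizable_UNIV_iff by (auto simp: g_def)
  qed
  then have "{0, s} \<subseteq> feasible_labels (sparse_class d k) k obs t" by blast
  then have "card {0, s} \<le> card (feasible_labels (sparse_class d k) k obs t)"
    by (rule card_mono[OF finite_feasible_labels])
  then show ?thesis using s(1) by simp
qed

lemma least_likely_pmf_at_fresh_point:
  assumes "bandit_realizable UNIV (sparse_class d k) obs" "\<forall>e\<in>set obs. fst e < t" "t < d"
  shows "pmf \<pi> (arg_min_on (pmf \<pi>) (feasible_labels (sparse_class d k) k obs t)) \<le> 1 / 2"
proof -
  let ?R = "feasible_labels (sparse_class d k) k obs t"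
  let ?y = "arg_min_on (pmf \<pi>) ?R"
  have y: "?y \<in> ?R" "\<forall>z\<in>?R. pmf \<pi> ?y \<le> pmf \<pi> z"
    using least_likely_label[of "sparse_class d k" k, OF _ assms(1)] sparse_class_le by blast+
  have "2 * pmf \<pi> ?y \<le> real (card ?R) * pmf \<pi> ?y"
    using fresh_point_feasible_labels[OF assms] by (intro mult_right_mono) auto
  then show ?thesis using card_mult_min_pmf_le_1[OF finite_feasible_labels y] by linarith
qed

lemma least_likely_adversary_fresh_points:
  "bandit_realizable UNIV (sparse_class d k) (obs_of h) \<Longrightarrow> \<forall>e\<in>set h. fst e < length h \<Longrightarrow>
    ennreal (real (min n (d - length h)) / 2)
      \<le> expected_mistakes L length (least_likely_adversary (sparse_class d k) k length) n h"
proof (induction n arbitrary: h)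
  case 0
  then show ?case by simp
next
  case (Suc n)
  define t where "t = length h"
  define \<pi> where "\<pi> = L (obs_of h) t"
  define y where "y = arg_min_on (pmf \<pi>) (feasible_labels (sparse_class d k) k (obs_of h) t)"
  define c where "c = real (min n (d - Suc t)) / 2"
  let ?adv = "least_likely_adversary (sparse_class d k) k length"
  show ?case
  proof (cases "t < d")
    case False
    then show ?thesis by (simp add: t_def)
  next
    case True
    have "\<forall>e\<in>set (obs_of h). fst e < t"
      using Suc.prems(2) unfolding obs_of_def t_def by auto
    then have q: "pmf \<pi> y \<le> 1 / 2"
      unfolding y_def by (rule least_likely_pmf_at_fresh_point[OF Suc.prems(1) _ True])
    have "ennreal c \<le> expected_mistakes L length ?adv n (h @ [(t, p, y)])" for p
    proof -
      have "y \<in> feasible_labels (sparse_class d k) k (obs_of h) t"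
        using least_likely_label(1)[of "sparse_class d k" k, OF _ Suc.prems(1)] sparse_class_le
        unfolding y_def by blast
      then have "bandit_realizable UNIV (sparse_class d k) (obs_of (h @ [(t, p, y)]))"
        using realizable_if_feasible by simp
      moreover have "\<forall>e\<in>set (h @ [(t, p, y)]). fst e < length (h @ [(t, p, y)])"
        using Suc.prems(2) unfolding t_def by auto
      ultimately show ?thesis using Suc.IH[of "h @ [(t, p, y)]"] by (simp add: c_def t_def)
    qed
    then have "(\<integral>\<^sup>+p. ennreal c \<partial>measure_pmf \<pi>)
        \<le> (\<integral>\<^sup>+p. expected_mistakes L length ?adv n (h @ [(t, p, y)]) \<partial>measure_pmf \<pi>)"
      by (intro nn_integral_mono)
    then have "ennreal (1 - pmf \<pi> y) + ennreal c \<le> expected_mistakes L length ?adv (Suc n) h"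
      unfolding expected_mistakes_least_likely_Suc \<pi>_def[symmetric] y_def[symmetric] t_def[symmetric]
      by (simp add: measure_pmf.emeasure_space_1 add_left_mono)
    moreover have "ennreal ((1 - pmf \<pi> y) + c) = ennreal (1 - pmf \<pi> y) + ennreal c"
      using pmf_le_1[of \<pi> y] by (intro ennreal_plus) (auto simp: c_def)
    moreover have "real (min (Suc n) (d - t)) / 2 \<le> (1 - pmf \<pi> y) + c"
      using q True unfolding c_def by (simp add: Suc_diff_Suc)
    ultimately show ?thesis unfolding t_def by (metis ennreal_leI order_trans)
  qed
qed

lemma feasible_labels_sparse_class_Nil:
  assumes "1 \<le> d" "1 \<le> k"
  shows "feasible_labels (sparse_class d k) k [] x = {0..k}"
proof -
  have "y \<in> feasible_labels (sparse_class d k) k [] x" if y: "y \<le> k" for y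
  proof -
    define g where "g z = (if z = x then y else max 1 y)" for z
    have "g \<in> sparse_class d k"
      using y assms by (intro sparse_classI[where A = "{x}" and s = "max 1 y"]) (auto simp: g_def)
    then show ?thesis using y unfolding feasible_labels_def bandit_realizable_UNIV_iff
      by (auto simp: g_def intro!: bexI[of _ g])
  qed
  then show ?thesis by (auto simp: feasible_labels_def)
qed

lemma opt_bandit_adap_sparse_class_ge:
  assumes "1 \<le> d" "1 \<le> k"
  shows "ennreal ((real d + real k) / 4) \<le> opt_bandit_adap UNIV (sparse_class d k) k"
proof (rule opt_bandit_adap_ge)
  fix L
  have bounded: "\<forall>f\<in>sparse_class d k. \<forall>x. f x \<le> k" using sparse_class_le by blast
  have realizable_Nil: "bandit_realizable UNIV (sparse_class d k) []"
    using const_in_sparse_class[of 1 k d] assms(2) unfolding bandit_realizable_UNIV_iff by auto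
  show "\<exists>ax ay T. valid_adversary UNIV (sparse_class d k) k L ax ay \<and>
      ennreal ((real d + real k) / 4) \<le> expected_mistakes L ax ay T []"
  proof (cases "k \<le> d")
    case True
    have "ennreal (real d / 2)
        \<le> expected_mistakes L length (least_likely_adversary (sparse_class d k) k length) d []"
      using least_likely_adversary_fresh_points[of d k "[]" d L] realizable_Nil by simp
    moreover have "ennreal ((real d + real k) / 4) \<le> ennreal (real d / 2)"
      using True by (intro ennreal_leI) simp
    ultimately show ?thesis using valid_least_likely_adversary[OF bounded] by (meson order_trans)
  next
    case False
    have "ennreal (real k / 2) \<le> expected_mistakes L (\<lambda>_. 0)
        (least_likely_adversary (sparse_class d k) k (\<lambda>_. 0)) k []"
      using least_likely_adversary_fixed_point[OF bounded, where h = "[]" and n = k and x = 0 and L = L]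
        realizable_Nil
      by (simp add: feasible_labels_sparse_class_Nil[OF assms])
    moreover have "ennreal ((real d + real k) / 4) \<le> ennreal (real k / 2)"
      using False by (intro ennreal_leI) simp
    ultimately show ?thesis using valid_least_likely_adversary[OF bounded] by (meson order_trans)
  qed
qed

section \<open>Upper bound against adaptive adversaries\<close>

lemma nn_integral_pmf_swap:
  "(\<integral>\<^sup>+x. \<integral>\<^sup>+y. f x y \<partial>measure_pmf B \<partial>measure_pmf A) =
   (\<integral>\<^sup>+y. \<integral>\<^sup>+x. f x y \<partial>measure_pmf A \<partial>measure_pmf B)"
  using nn_integral_pair_pmf'[where f = "case_prod f" and A = A and B = B]
    nn_integral_pair_pmf'[where f = "\<lambda>(y, x). f x y" and A = B and B = A]
  by (simp add: pair_commute_pmf[of A B] case_prod_beta)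

lemma nn_integral_pmf_of_set_le:
  assumes "finite S" "S \<noteq> {}" "\<And>p. p \<in> S \<Longrightarrow> 0 \<le> F p" "(\<Sum>p\<in>S. F p) \<le> real (card S) * c"
  shows "(\<integral>\<^sup>+p. ennreal (F p) \<partial>measure_pmf (pmf_of_set S)) \<le> ennreal c"
proof -
  have card: "0 < card S" using assms(1,2) by (simp add: card_gt_0_iff)
  have "(\<integral>\<^sup>+p. ennreal (F p) \<partial>measure_pmf (pmf_of_set S)) = ennreal (\<Sum>p\<in>S. F p) / ennreal (real (card S))"
    using assms(1-3) by (simp add: nn_integral_pmf_of_set sum_ennreal ennreal_of_nat_eq_real_of_nat)
  also have "\<dots> = ennreal ((\<Sum>p\<in>S. F p) / real (card S))"
    using assms(3) card by (intro divide_ennreal) (auto intro: sum_nonneg)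
  also have "\<dots> \<le> ennreal c"
    using assms(4) card by (intro ennreal_leI) (simp add: divide_le_eq mult.commute)
  finally show ?thesis .
qed

lemma sum_le_single_plus_rest:
  fixes F :: "'a \<Rightarrow> real"
  assumes "finite S" "j \<in> S" "F j \<le> a" "\<And>i. i \<in> S \<Longrightarrow> i \<noteq> j \<Longrightarrow> F i \<le> b"
  shows "(\<Sum>i\<in>S. F i) \<le> a + real (card S - 1) * b"
proof -
  have "(\<Sum>i\<in>S. F i) = F j + (\<Sum>i\<in>S - {j}. F i)"
    using assms(1,2) by (simp add: sum.remove)
  also have "\<dots> \<le> a + (\<Sum>i\<in>S - {j}. b)"
    using assms by (intro add_mono sum_mono) auto
  finally show ?thesis using assms(1,2) by simp
qed

definition label_known :: "(nat \<times> nat \<times> bool) list \<Rightarrow> nat \<Rightarrow> bool" where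
  "label_known obs x \<longleftrightarrow> (\<exists>q. (x, q, True) \<in> set obs)"

definition known_label :: "(nat \<times> nat \<times> bool) list \<Rightarrow> nat \<Rightarrow> nat" where
  "known_label obs x = (SOME q. (x, q, True) \<in> set obs)"

definition level_known :: "(nat \<times> nat \<times> bool) list \<Rightarrow> bool" where
  "level_known obs \<longleftrightarrow> (\<exists>z p. (z, p, True) \<in> set obs \<and> p \<noteq> 0)"

definition known_level :: "(nat \<times> nat \<times> bool) list \<Rightarrow> nat" where
  "known_level obs = (SOME p. \<exists>z. (z, p, True) \<in> set obs \<and> p \<noteq> 0)"

text \<open>Zero with probability \<open>1/2\<close> and each of \<open>1, \<dots>, k\<close> with probability \<open>1/(2k)\<close>.\<close>

definition half_zero_pmf :: "nat \<Rightarrow> nat pmf" where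
  "half_zero_pmf k = map_pmf (\<lambda>i. if i < k then 0 else i - k + 1) (pmf_of_set {..<2 * k})"

definition randomized_learner :: "nat \<Rightarrow> (nat \<times> nat \<times> bool) list \<Rightarrow> nat \<Rightarrow> nat pmf" where
  "randomized_learner k obs x =
     (if label_known obs x then return_pmf (known_label obs x)
      else if level_known obs then
        return_pmf (if (x, known_level obs, False) \<in> set obs then 0 else known_level obs)
      else if (x, 0, False) \<in> set obs then pmf_of_set {0..k}
      else half_zero_pmf k)"

definition zeros_found :: "(nat \<times> nat \<times> bool) list \<Rightarrow> nat set" where
  "zeros_found obs = {x. (x, 0, True) \<in> set obs}"

definition zeros_inferred :: "(nat \<times> nat \<times> bool) list \<Rightarrow> nat set" where
  "zeros_inferred obs = {x. (x, 0, True) \<in> set obs \<or> (x, known_level obs, False) \<in> set obs}"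

definition adaptive_potential :: "nat \<Rightarrow> nat \<Rightarrow> (nat \<times> nat \<times> bool) list \<Rightarrow> real" where
  "adaptive_potential d k obs =
     (if level_known obs then real d - real (card (zeros_inferred obs))
      else 5 * real d + 4 * real k - 4 * real (card (zeros_found obs)))"

definition step_cost :: "nat \<Rightarrow> nat \<Rightarrow> (nat \<times> nat \<times> bool) list \<Rightarrow> nat \<Rightarrow> nat \<Rightarrow> nat \<Rightarrow> real" where
  "step_cost d k obs x p y = (if p = y then 0 else 1) + adaptive_potential d k (obs @ [(x, p, p = y)])"

lemma set_half_zero_pmf:
  assumes "1 \<le> k"
  shows "set_pmf (half_zero_pmf k) = {0..k}"
proof -
  define g where "g i = (if i < k then 0 else i - k + 1)" for i :: nat
  have "y \<in> g ` {..<2 * k}" if "y \<le> k" for y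
  proof (cases "y = 0")
    case True
    then show ?thesis using assms by (intro image_eqI[of _ _ 0]) (auto simp: g_def)
  next
    case False
    then show ?thesis using that by (intro image_eqI[of _ _ "y + k - 1"]) (auto simp: g_def)
  qed
  moreover have "g ` {..<2 * k} \<subseteq> {0..k}" by (auto simp: g_def)
  moreover have "set_pmf (pmf_of_set {..<2 * k}) = {..<2 * k}"
    using assms by (intro set_pmf_of_set) (auto simp: lessThan_empty_iff)
  then have "set_pmf (half_zero_pmf k) = g ` {..<2 * k}"
    unfolding half_zero_pmf_def g_def[abs_def] by simp
  ultimately show ?thesis by auto
qed

lemma finite_zeros_found: "finite (zeros_found obs)"
  unfolding zeros_found_def by (rule finite_Collect_mem_set)

lemma finite_zeros_inferred: "finite (zeros_inferred obs)"
  unfolding zeros_inferred_def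
  using finite_Collect_mem_set[of "(0, True)" obs] finite_Collect_mem_set[of "(known_level obs, False)" obs]
  by (simp add: Collect_disj_eq)

lemma known_label_eq:
  assumes "consistent f obs" "label_known obs x"
  shows "known_label obs x = f x"
proof -
  have "(x, known_label obs x, True) \<in> set obs"
    using assms(2) unfolding label_known_def known_label_def by (rule someI_ex)
  then show ?thesis by (rule consistent_correct[OF assms(1), symmetric])
qed

lemma known_level_eq:
  assumes "f \<in> sparse_class d k" "consistent f obs" "level_known obs" "f z \<noteq> 0"
  shows "known_level obs = f z"
proof -
  have "\<exists>z. (z, known_level obs, True) \<in> set obs \<and> known_level obs \<noteq> 0"
    unfolding known_level_def by (rule someI_ex) (use assms(3) in \<open>auto simp: level_known_def\<close>)
  then obtain z' where z': "(z', known_level obs, True) \<in> set obs" "known_level obs \<noteq> 0" by blast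
  have "f z' = known_level obs" by (rule consistent_correct[OF assms(2) z'(1)])
  then show ?thesis using sparse_class_nonzero_eq[OF assms(1), of z' z] assms(4) z'(2) by simp
qed

lemma known_level_snoc:
  assumes "f \<in> sparse_class d k" "consistent f (obs @ [e])" "level_known obs"
  shows "level_known (obs @ [e])" "known_level (obs @ [e]) = known_level obs"
proof -
  show known: "level_known (obs @ [e])" using assms(3) unfolding level_known_def by auto
  have f_obs: "consistent f obs" using assms(2) by simp
  obtain z p where z: "(z, p, True) \<in> set obs" "p \<noteq> 0"
    using assms(3) unfolding level_known_def by blast
  then have "f z \<noteq> 0" using consistent_correct[OF f_obs] by fastforce
  then show "known_level (obs @ [e]) = known_level obs"
    using known_level_eq[OF assms(1,2) known] known_level_eq[OF assms(1) f_obs assms(3)] by simp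
qed

lemma zeros_found_subset: "consistent f obs \<Longrightarrow> zeros_found obs \<subseteq> {x. f x = 0}"
  unfolding zeros_found_def using consistent_correct by fastforce

lemma zeros_inferred_subset:
  assumes "f \<in> sparse_class d k" "consistent f obs" "level_known obs"
  shows "zeros_inferred obs \<subseteq> {x. f x = 0}"
proof
  fix x assume "x \<in> zeros_inferred obs"
  then consider "(x, 0, True) \<in> set obs" | "(x, known_level obs, False) \<in> set obs"
    unfolding zeros_inferred_def by blast
  then show "x \<in> {x. f x = 0}"
  proof cases
    case 2
    then have "f x \<noteq> known_level obs" using consistent_wrong[OF assms(2)] by blast
    then show ?thesis using known_level_eq[OF assms, of x] by auto
  qed (use consistent_correct[OF assms(2)] in auto)
qed

lemma adaptive_potential_bounds:
  assumes "f \<in> sparse_class d k" "consistent f obs"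
  shows "0 \<le> adaptive_potential d k obs"
    and "\<not> level_known obs \<Longrightarrow> real d + 4 * real k \<le> adaptive_potential d k obs"
    and "level_known obs \<Longrightarrow> adaptive_potential d k obs \<le> real d"
proof -
  have found: "card (zeros_found obs) \<le> d"
    by (rule card_le_if_subset_zeros[OF assms(1) zeros_found_subset[OF assms(2)]])
  have inferred: "level_known obs \<Longrightarrow> card (zeros_inferred obs) \<le> d"
    using card_le_if_subset_zeros[OF assms(1) zeros_inferred_subset[OF assms]] .
  show "0 \<le> adaptive_potential d k obs"
    using found inferred unfolding adaptive_potential_def by auto
  show "\<not> level_known obs \<Longrightarrow> real d + 4 * real k \<le> adaptive_potential d k obs"
    using found unfolding adaptive_potential_def by auto
  show "level_known obs \<Longrightarrow> adaptive_potential d k obs \<le> real d"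
    unfolding adaptive_potential_def by auto
qed

lemma adaptive_potential_mono:
  assumes f: "f \<in> sparse_class d k" "consistent f (obs @ [e])"
  shows "adaptive_potential d k (obs @ [e]) \<le> adaptive_potential d k obs"
proof -
  have f_obs: "consistent f obs" using f(2) by simp
  consider "level_known obs" | "\<not> level_known obs" "level_known (obs @ [e])"
    | "\<not> level_known (obs @ [e])"
    using known_level_snoc(1)[OF f] by blast
  then show ?thesis
  proof cases
    case 1
    then have "zeros_inferred obs \<subseteq> zeros_inferred (obs @ [e])"
      using known_level_snoc[OF f] unfolding zeros_inferred_def by auto
    then show ?thesis
      using 1 known_level_snoc(1)[OF f 1] card_mono[OF finite_zeros_inferred]
      unfolding adaptive_potential_def by simp
  next
    case 2
    then show ?thesis
      using adaptive_potential_bounds(2)[OF f(1) f_obs] adaptive_potential_bounds(3)[OF f] by simp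
  next
    case 3
    then have "\<not> level_known obs" unfolding level_known_def by auto
    moreover have "zeros_found obs \<subseteq> zeros_found (obs @ [e])" unfolding zeros_found_def by auto
    ultimately show ?thesis
      using 3 card_mono[OF finite_zeros_found] unfolding adaptive_potential_def by simp
  qed
qed

lemma step_cost_bounds:
  assumes "bandit_realizable UNIV (sparse_class d k) (obs @ [(x, p, p = y)])"
  shows "0 \<le> step_cost d k obs x p y" "step_cost d k obs x p y \<le> 1 + adaptive_potential d k obs"
proof -
  obtain f where f: "f \<in> sparse_class d k" "consistent f (obs @ [(x, p, p = y)])"
    using assms unfolding bandit_realizable_UNIV_iff by blast
  show "0 \<le> step_cost d k obs x p y"
    using adaptive_potential_bounds(1)[OF f] unfolding step_cost_def by simp
  show "step_cost d k obs x p y \<le> 1 + adaptive_potential d k obs"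
    using adaptive_potential_mono[OF f] unfolding step_cost_def by (cases "p = y") simp_all
qed

lemma step_cost_correct:
  assumes "bandit_realizable UNIV (sparse_class d k) (obs @ [(x, y, True)])"
  shows "step_cost d k obs x y y \<le> adaptive_potential d k obs"
    and "y \<noteq> 0 \<Longrightarrow> step_cost d k obs x y y \<le> real d"
proof -
  obtain f where f: "f \<in> sparse_class d k" "consistent f (obs @ [(x, y, True)])"
    using assms unfolding bandit_realizable_UNIV_iff by blast
  show "step_cost d k obs x y y \<le> adaptive_potential d k obs"
    using adaptive_potential_mono[OF f] unfolding step_cost_def by simp
  assume "y \<noteq> 0"
  then have "level_known (obs @ [(x, y, True)])" unfolding level_known_def by auto
  then show "step_cost d k obs x y y \<le> real d"
    using adaptive_potential_bounds(3)[OF f] unfolding step_cost_def by simp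
qed

lemma realizable_forces_label:
  assumes "bandit_realizable UNIV H (obs @ [(x, q, q = y)])"
    and "\<And>g. g \<in> H \<Longrightarrow> consistent g obs \<Longrightarrow> g x = q"
  shows "q = y"
proof -
  obtain g where g: "g \<in> H" "consistent g (obs @ [(x, q, q = y)])"
    using assms(1) unfolding bandit_realizable_UNIV_iff by blast
  then have "g x = q" by (intro assms(2)) simp_all
  then show ?thesis using g(2) by simp
qed

lemma adaptive_potential_snoc_refute_level:
  assumes re: "bandit_realizable UNIV (sparse_class d k) (obs @ [(x, known_level obs, False)])"
    and level: "level_known obs" and unknown: "\<not> label_known obs x"
    and fresh: "(x, known_level obs, False) \<notin> set obs"
  shows "adaptive_potential d k (obs @ [(x, known_level obs, False)]) = adaptive_potential d k obs - 1"
proof -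
  obtain g where g: "g \<in> sparse_class d k" "consistent g (obs @ [(x, known_level obs, False)])"
    using re unfolding bandit_realizable_UNIV_iff by blast
  have "zeros_inferred (obs @ [(x, known_level obs, False)]) = insert x (zeros_inferred obs)"
    using known_level_snoc(2)[OF g level] unfolding zeros_inferred_def by auto
  moreover have "x \<notin> zeros_inferred obs"
    using unknown fresh unfolding zeros_inferred_def label_known_def by auto
  ultimately show ?thesis
    using known_level_snoc(1)[OF g level] level finite_zeros_inferred
    unfolding adaptive_potential_def by simp
qed

lemma adaptive_potential_snoc_new_zero:
  assumes "\<not> level_known obs" "\<not> label_known obs x"
  shows "adaptive_potential d k (obs @ [(x, 0, True)]) = adaptive_potential d k obs - 4"
proof -
  have "zeros_found (obs @ [(x, 0, True)]) = insert x (zeros_found obs)"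
    unfolding zeros_found_def by auto
  moreover have "x \<notin> zeros_found obs"
    using assms(2) unfolding zeros_found_def label_known_def by auto
  moreover have "\<not> level_known (obs @ [(x, 0, True)])"
    using assms(1) unfolding level_known_def by auto
  ultimately show ?thesis
    using assms(1) finite_zeros_found unfolding adaptive_potential_def by simp
qed

lemma expected_step_cost_level_known:
  assumes unknown: "\<not> label_known obs x" and level: "level_known obs"
    and re: "\<forall>p\<in>set_pmf (randomized_learner k obs x).
      bandit_realizable UNIV (sparse_class d k) (obs @ [(x, p, p = y)])"
  shows "(\<integral>\<^sup>+p. ennreal (step_cost d k obs x p y) \<partial>measure_pmf (randomized_learner k obs x))
    \<le> ennreal (adaptive_potential d k obs)"
proof -
  define s where "s = known_level obs"
  define q where "q = (if (x, s, False) \<in> set obs then 0 else s)"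
  have learner: "randomized_learner k obs x = return_pmf q"
    using unknown level by (simp add: randomized_learner_def q_def s_def)
  have re_q: "bandit_realizable UNIV (sparse_class d k) (obs @ [(x, q, q = y)])"
    using re learner by simp
  have "step_cost d k obs x q y \<le> adaptive_potential d k obs"
  proof (cases "q = y")
    case True
    then show ?thesis using step_cost_correct(1) re_q by simp
  next
    case wrong: False
    \<comment> \<open>a point refuted at the level is a zero, so only a guess of the level can be wrong\<close>
    have fresh: "(x, s, False) \<notin> set obs"
    proof
      assume refuted: "(x, s, False) \<in> set obs"
      have "g x = 0" if "g \<in> sparse_class d k" "consistent g obs" for g
        using known_level_eq[OF that level, of x] consistent_wrong[OF that(2) refuted]
        by (cases "g x = 0") (auto simp: s_def)
      then show False using realizable_forces_label[OF re_q] wrong refuted by (simp add: q_def)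
    qed
    then have "adaptive_potential d k (obs @ [(x, s, False)]) = adaptive_potential d k obs - 1"
      using adaptive_potential_snoc_refute_level[OF _ level unknown] re_q wrong
      unfolding q_def s_def by simp
    then show ?thesis using wrong fresh unfolding step_cost_def q_def by simp
  qed
  then show ?thesis unfolding learner by (simp add: ennreal_leI)
qed

lemma expected_step_cost_refuted_zero:
  assumes f: "f \<in> sparse_class d k" "consistent f obs" and y: "y \<le> k"
    and unknown: "\<not> label_known obs x" "\<not> level_known obs" and refuted: "(x, 0, False) \<in> set obs"
    and re: "\<forall>p\<in>set_pmf (randomized_learner k obs x).
      bandit_realizable UNIV (sparse_class d k) (obs @ [(x, p, p = y)])"
  shows "(\<integral>\<^sup>+p. ennreal (step_cost d k obs x p y) \<partial>measure_pmf (randomized_learner k obs x))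
    \<le> ennreal (adaptive_potential d k obs)"
proof -
  let ?\<Phi> = "adaptive_potential d k obs"
  have learner: "randomized_learner k obs x = pmf_of_set {0..k}"
    using unknown refuted by (simp add: randomized_learner_def)
  have re': "\<forall>p\<in>{0..k}. bandit_realizable UNIV (sparse_class d k) (obs @ [(x, p, p = y)])"
    using re unfolding learner by simp
  have "y \<in> {0..k}" using y by simp
  then have re_y: "bandit_realizable UNIV (sparse_class d k) (obs @ [(x, y, True)])"
    using re' by fastforce
  have "y \<noteq> 0"
    using re_y refuted unfolding bandit_realizable_UNIV_iff by (auto dest: consistent_wrong)
  then have "(\<Sum>p\<in>{0..k}. step_cost d k obs x p y) \<le> real d + real (card {0..k} - 1) * (1 + ?\<Phi>)"
    using y re' step_cost_correct(2)[OF re_y] step_cost_bounds(2)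
    by (intro sum_le_single_plus_rest) auto
  also have "\<dots> \<le> real (card {0..k}) * ?\<Phi>"
    using adaptive_potential_bounds(2)[OF f unknown(2)] by (simp add: algebra_simps)
  finally show ?thesis
    unfolding learner using re' step_cost_bounds(1)
    by (intro nn_integral_pmf_of_set_le) auto
qed

lemma expected_step_cost_fresh:
  assumes f: "f \<in> sparse_class d k" "consistent f obs" and k: "1 \<le> k" and y: "y \<le> k"
    and unknown: "\<not> label_known obs x" "\<not> level_known obs" and fresh: "(x, 0, False) \<notin> set obs"
    and re: "\<forall>p\<in>set_pmf (randomized_learner k obs x).
      bandit_realizable UNIV (sparse_class d k) (obs @ [(x, p, p = y)])"
  shows "(\<integral>\<^sup>+p. ennreal (step_cost d k obs x p y) \<partial>measure_pmf (randomized_learner k obs x))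
    \<le> ennreal (adaptive_potential d k obs)"
proof -
  let ?\<Phi> = "adaptive_potential d k obs"
  define g where "g i = (if i < k then 0 else i - k + 1)" for i :: nat
  define F where "F i = step_cost d k obs x (g i) y" for i
  have learner: "randomized_learner k obs x = map_pmf g (pmf_of_set {..<2 * k})"
    using unknown fresh by (simp add: randomized_learner_def half_zero_pmf_def g_def[abs_def])
  have re_all: "\<forall>p\<in>{0..k}. bandit_realizable UNIV (sparse_class d k) (obs @ [(x, p, p = y)])"
    using re set_half_zero_pmf[OF k] unknown fresh by (simp add: randomized_learner_def)
  have re': "bandit_realizable UNIV (sparse_class d k) (obs @ [(x, g i, g i = y)])" if "i < 2 * k" for i
  proof -
    have "g i \<in> {0..k}" using that by (auto simp: g_def)
    then show ?thesis using re_all by blast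
  qed
  have Phi_big: "real d + 4 * real k \<le> ?\<Phi>"
    by (rule adaptive_potential_bounds(2)[OF f unknown(2)])
  have "(\<Sum>i\<in>{..<2 * k}. F i) \<le> real (card {..<2 * k}) * ?\<Phi>"
  proof (cases "y = 0")
    case True
    \<comment> \<open>a correct guess of \<open>0\<close> at a fresh point finds a new zero, paying for the wrong guesses\<close>
    have zero: "F i = ?\<Phi> - 4" if "i < k" for i
      using that True adaptive_potential_snoc_new_zero[OF unknown(2,1)]
      unfolding F_def g_def step_cost_def by simp
    have "(\<Sum>i\<in>{..<2 * k}. F i) = (\<Sum>i\<in>{..<k}. F i) + (\<Sum>i\<in>{k..<2 * k}. F i)"
      by (subst sum.union_disjoint[symmetric]) (auto intro!: sum.cong)
    also have "\<dots> \<le> (\<Sum>i\<in>{..<k}. ?\<Phi> - 4) + (\<Sum>i\<in>{k..<2 * k}. 1 + ?\<Phi>)"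
      using zero re' step_cost_bounds(2) unfolding F_def by (intro add_mono sum_mono) auto
    finally show ?thesis by (simp add: algebra_simps)
  next
    case False
    define j where "j = y + k - 1"
    have j: "j < 2 * k" "g j = y" using False y unfolding j_def g_def by auto
    have "F j \<le> real d"
      using re'[OF j(1)] j(2) step_cost_correct(2)[of d k obs x y] False unfolding F_def by simp
    moreover have "F i \<le> 1 + ?\<Phi>" if "i < 2 * k" for i
      using re'[OF that] step_cost_bounds(2) unfolding F_def by blast
    ultimately have "(\<Sum>i\<in>{..<2 * k}. F i) \<le> real d + real (card {..<2 * k} - 1) * (1 + ?\<Phi>)"
      using j(1) by (intro sum_le_single_plus_rest) auto
    also have "\<dots> \<le> real (card {..<2 * k}) * ?\<Phi>"
      using Phi_big k by (simp add: algebra_simps of_nat_diff)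
    finally show ?thesis .
  qed
  then show ?thesis
    unfolding learner nn_integral_map_pmf F_def[symmetric] using re' step_cost_bounds(1) k
    by (intro nn_integral_pmf_of_set_le) (auto simp: F_def lessThan_empty_iff)
qed

lemma expected_step_cost_le:
  assumes f: "f \<in> sparse_class d k" "consistent f obs" and k: "1 \<le> k" and y: "y \<le> k"
    and re: "\<forall>p\<in>set_pmf (randomized_learner k obs x).
      bandit_realizable UNIV (sparse_class d k) (obs @ [(x, p, p = y)])"
  shows "(\<integral>\<^sup>+p. ennreal (step_cost d k obs x p y) \<partial>measure_pmf (randomized_learner k obs x))
    \<le> ennreal (adaptive_potential d k obs)"
proof (cases "label_known obs x")
  case True
  have learner: "randomized_learner k obs x = return_pmf (known_label obs x)"
    using True by (simp add: randomized_learner_def)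
  then have "bandit_realizable UNIV (sparse_class d k)
      (obs @ [(x, known_label obs x, known_label obs x = y)])"
    using re by simp
  then have "known_label obs x = y"
    by (rule realizable_forces_label) (simp add: known_label_eq True)
  then show ?thesis
    using step_cost_correct(1) re unfolding learner by (simp add: ennreal_leI)
next
  case False
  consider "level_known obs" | "\<not> level_known obs" "(x, 0, False) \<in> set obs"
    | "\<not> level_known obs" "(x, 0, False) \<notin> set obs"
    by blast
  then show ?thesis
  proof cases
    case 1
    then show ?thesis by (rule expected_step_cost_level_known[OF False _ re])
  next
    case 2
    then show ?thesis by (rule expected_step_cost_refuted_zero[OF f y False _ _ re])
  next
    case 3
    then show ?thesis by (rule expected_step_cost_fresh[OF f k y False _ _ re])
  qed
qed

lemma mistake_plus_le_step_cost:
  assumes "bandit_realizable UNIV (sparse_class d k) (obs @ [(x, p, p = y)])"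
    and "E \<le> ennreal (adaptive_potential d k (obs @ [(x, p, p = y)]))"
  shows "of_nat (if p = y then 0 else 1) + E \<le> ennreal (step_cost d k obs x p y)"
proof -
  obtain g where "g \<in> sparse_class d k" "consistent g (obs @ [(x, p, p = y)])"
    using assms(1) unfolding bandit_realizable_UNIV_iff by blast
  then have "0 \<le> adaptive_potential d k (obs @ [(x, p, p = y)])"
    by (rule adaptive_potential_bounds(1))
  then show ?thesis using assms(2) unfolding step_cost_def by (simp add: ennreal_plus add_mono)
qed

lemma expected_mistakes_randomized_learner:
  assumes V: "valid_adversary UNIV (sparse_class d k) k (randomized_learner k) ax ay" and k: "1 \<le> k"
  shows "bandit_realizable UNIV (sparse_class d k) (obs_of h) \<Longrightarrow>
    expected_mistakes (randomized_learner k) ax ay n h \<le> ennreal (adaptive_potential d k (obs_of h))"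
proof (induction n arbitrary: h)
  case 0
  then show ?case by simp
next
  case (Suc n)
  define x where "x = ax h"
  define \<pi> where "\<pi> = randomized_learner k (obs_of h) x"
  define \<tau> where "\<tau> = ay h \<pi>"
  have \<tau>: "set_pmf \<tau> \<subseteq> {0..k}"
    and re: "\<forall>p\<in>set_pmf \<pi>. \<forall>y\<in>set_pmf \<tau>. bandit_realizable UNIV (sparse_class d k) (obs_of h @ [(x, p, p = y)])"
    using V Suc.prems unfolding valid_adversary_def Let_def x_def \<pi>_def \<tau>_def by auto
  obtain f where f: "f \<in> sparse_class d k" "consistent f (obs_of h)"
    using Suc.prems unfolding bandit_realizable_UNIV_iff by blast
  have "expected_mistakes (randomized_learner k) ax ay (Suc n) h
      = (\<integral>\<^sup>+p. \<integral>\<^sup>+y. of_nat (if p = y then 0 else 1) +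
          expected_mistakes (randomized_learner k) ax ay n (h @ [(x, p, y)]) \<partial>measure_pmf \<tau> \<partial>measure_pmf \<pi>)"
    unfolding expected_mistakes_Suc x_def \<pi>_def \<tau>_def ..
  also have "\<dots> \<le> (\<integral>\<^sup>+p. \<integral>\<^sup>+y. ennreal (step_cost d k (obs_of h) x p y) \<partial>measure_pmf \<tau> \<partial>measure_pmf \<pi>)"
  proof (intro nn_integral_mono_AE, unfold AE_measure_pmf_iff, intro ballI)
    fix p assume p: "p \<in> set_pmf \<pi>"
    show "(\<integral>\<^sup>+y. of_nat (if p = y then 0 else 1) +
        expected_mistakes (randomized_learner k) ax ay n (h @ [(x, p, y)]) \<partial>measure_pmf \<tau>)
      \<le> (\<integral>\<^sup>+y. ennreal (step_cost d k (obs_of h) x p y) \<partial>measure_pmf \<tau>)"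
    proof (intro nn_integral_mono_AE, unfold AE_measure_pmf_iff, intro ballI)
      fix y assume "y \<in> set_pmf \<tau>"
      then have re_py: "bandit_realizable UNIV (sparse_class d k) (obs_of h @ [(x, p, p = y)])"
        using re p by simp
      then have "expected_mistakes (randomized_learner k) ax ay n (h @ [(x, p, y)])
          \<le> ennreal (adaptive_potential d k (obs_of h @ [(x, p, p = y)]))"
        using Suc.IH[of "h @ [(x, p, y)]"] by simp
      then show "of_nat (if p = y then 0 else 1) +
          expected_mistakes (randomized_learner k) ax ay n (h @ [(x, p, y)])
        \<le> ennreal (step_cost d k (obs_of h) x p y)"
        by (rule mistake_plus_le_step_cost[OF re_py])
    qed
  qed
  also have "\<dots> = (\<integral>\<^sup>+y. \<integral>\<^sup>+p. ennreal (step_cost d k (obs_of h) x p y) \<partial>measure_pmf \<pi> \<partial>measure_pmf \<tau>)"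
    by (rule nn_integral_pmf_swap)
  also have "\<dots> \<le> (\<integral>\<^sup>+y. ennreal (adaptive_potential d k (obs_of h)) \<partial>measure_pmf \<tau>)"
    using expected_step_cost_le[OF f k] \<tau> re unfolding \<pi>_def
    by (intro nn_integral_mono_AE) (auto simp: AE_measure_pmf_iff)
  finally show ?case by (simp add: measure_pmf.emeasure_space_1)
qed

lemma opt_bandit_adap_sparse_class_le:
  assumes "1 \<le> k"
  shows "opt_bandit_adap UNIV (sparse_class d k) k \<le> ennreal (5 * real d + 4 * real k)"
proof (rule opt_bandit_adap_le)
  fix ax ay T
  assume "valid_adversary UNIV (sparse_class d k) k (randomized_learner k) ax ay"
  moreover have "bandit_realizable UNIV (sparse_class d k) []"
    using const_in_sparse_class[of 1 k d] assms unfolding bandit_realizable_UNIV_iff by auto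
  ultimately show "expected_mistakes (randomized_learner k) ax ay T [] \<le> ennreal (5 * real d + 4 * real k)"
    using expected_mistakes_randomized_learner[OF _ assms, where h = "[]" and n = T]
    by (simp add: adaptive_potential_def level_known_def zeros_found_def)
qed

theorem theorem7p1:
  shows "\<exists>c C :: real. 0 < c \<and> c \<le> C \<and>
    (\<forall>d k :: nat. d \<ge> 1 \<longrightarrow> k \<ge> 2 \<longrightarrow>
      (\<exists>(X :: nat set) (H :: (nat \<Rightarrow> nat) set).
         H \<noteq> {} \<and> (\<forall>h\<in>H. \<forall>x\<in>X. h x \<in> {0..k}) \<and>
         opt_full_det X H = of_nat (d + 1) \<and>
         ennreal (c * real d * real k) \<le> opt_bandit_det X H \<and>
         opt_bandit_det X H \<le> ennreal (C * real d * real k) \<and>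
         ennreal (c * (real d + real k)) \<le> opt_bandit_adap X H k \<and>
         opt_bandit_adap X H k \<le> ennreal (C * (real d + real k))))"
proof (rule exI[of _ "1/4"], rule exI[of _ 5], intro conjI allI impI)
  fix d k :: nat
  assume d: "d \<ge> 1" and k: "k \<ge> 2"
  let ?H = "sparse_class d k"
  have "?H \<noteq> {}" using const_in_sparse_class[of 1 k d] k by auto
  moreover have "\<forall>h\<in>?H. \<forall>x\<in>UNIV. h x \<in> {0..k}" using sparse_class_le by auto
  moreover have "ennreal (1/4 * real d * real k) \<le> opt_bandit_det UNIV ?H"
    by (rule order_trans[OF ennreal_leI opt_bandit_det_sparse_class_ge]) (use k in simp_all)
  moreover have "opt_bandit_det UNIV ?H \<le> ennreal (5 * real d * real k)"
    by (rule order_trans[OF opt_bandit_det_sparse_class_le ennreal_leI]) (use d in simp_all)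
  moreover have "ennreal (1/4 * (real d + real k)) \<le> opt_bandit_adap UNIV ?H k"
    using opt_bandit_adap_sparse_class_ge[of d k] d k by simp
  moreover have "opt_bandit_adap UNIV ?H k \<le> ennreal (5 * (real d + real k))"
    by (rule order_trans[OF opt_bandit_adap_sparse_class_le ennreal_leI]) (use k in simp_all)
  ultimately show "\<exists>X H. H \<noteq> {} \<and> (\<forall>h\<in>H. \<forall>x\<in>X. h x \<in> {0..k}) \<and>
      opt_full_det X H = of_nat (d + 1) \<and>
      ennreal (1/4 * real d * real k) \<le> opt_bandit_det X H \<and>
      opt_bandit_det X H \<le> ennreal (5 * real d * real k) \<and>
      ennreal (1/4 * (real d + real k)) \<le> opt_bandit_adap X H k \<and>
      opt_bandit_adap X H k \<le> ennreal (5 * (real d + real k))"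
    using opt_full_det_sparse_class[OF k] by blast
qed simp_all

end
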